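(* Let $K\ge 2$, let $\pi_1,\dots,\pi_K>0$ with $\sum_k\pi_k=1$, and let $\mu_1,\dots,\mu_K$ be pairwise distinct reals. For $\epsilon\in[0,1-\max_k\pi_k]$ let $f(\epsilon)$ be the supremum of $$\sum_{k'=1}^K\tilde\pi_{k'}\tilde\mu_{k'}^2$$ over all matrices $(\pi_{kk'})_{k,k'=1}^K$ with $\pi_{kk'}\ge 0$, $\sum_{k'}\pi_{kk'}=\pi_k$ for all $k$, and $1-\sum_{k'}\max_k\pi_{kk'}\ge\epsilon$, where $\tilde\pi_{k'}=\sum_k\pi_{kk'}$, $\tilde\mu_{k'}=\sum_k\pi_{kk'}\mu_k/\tilde\pi_{k'}$, and terms with $\tilde\pi_{k'}=0$ are taken to be $0$. Then $f$ is non-increasing on $[0,1-\max_k\pi_k]$, $f(0)=\sum_k\pi_k\mu_k^2$, and $f(\epsilon)<f(0)$ for every $\epsilon\in(0,1-\max_k\pi_k]$.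
   Context: Here $\pi_{kk'}$ plays the role of the proportion of samples lying both in the $k$-th true cluster and the $k'$-th estimated cluster, and $1-\sum_{k'}\max_k\pi_{kk'}$ is the corresponding error clustering rate. *)

theory Defs
  imports "HOL-Analysis.Analysis"
begin

text \<open>Clusters are indexed by {..<K}. A matrix is P :: nat => nat => real, with P k k'
  the proportion of samples in true cluster k and estimated cluster k'.\<close>

definition col_mass :: "nat \<Rightarrow> (nat \<Rightarrow> nat \<Rightarrow> real) \<Rightarrow> nat \<Rightarrow> real" where
  "col_mass K P k' = (\<Sum>k<K. P k k')"

definition col_mean :: "nat \<Rightarrow> (nat \<Rightarrow> nat \<Rightarrow> real) \<Rightarrow> (nat \<Rightarrow> real) \<Rightarrow> nat \<Rightarrow> real" where
  "col_mean K P mu k' = (\<Sum>k<K. P k k' * mu k) / col_mass K P k'"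

definition objective :: "nat \<Rightarrow> (nat \<Rightarrow> nat \<Rightarrow> real) \<Rightarrow> (nat \<Rightarrow> real) \<Rightarrow> real" where
  "objective K P mu = (\<Sum>k'<K. if col_mass K P k' = 0 then 0
       else col_mass K P k' * (col_mean K P mu k')\<^sup>2)"

definition error_rate :: "nat \<Rightarrow> (nat \<Rightarrow> nat \<Rightarrow> real) \<Rightarrow> real" where
  "error_rate K P = 1 - (\<Sum>k'<K. Max ((\<lambda>k. P k k') ` {..<K}))"

definition feasible :: "nat \<Rightarrow> (nat \<Rightarrow> real) \<Rightarrow> real \<Rightarrow> (nat \<Rightarrow> nat \<Rightarrow> real) \<Rightarrow> bool" where
  "feasible K p eps P \<longleftrightarrow>
     (\<forall>k<K. \<forall>k'<K. P k k' \<ge> 0) \<and>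
     (\<forall>k<K. (\<Sum>k'<K. P k k') = p k) \<and>
     error_rate K P \<ge> eps"

definition fval :: "nat \<Rightarrow> (nat \<Rightarrow> real) \<Rightarrow> (nat \<Rightarrow> real) \<Rightarrow> real \<Rightarrow> real" where
  "fval K p mu eps = Sup {objective K P mu | P. feasible K p eps P}"

end

theory Submission
  imports Defs
begin

(* Let V = \<Sum>k p_k mu_k\<^sup>2 and let D > 0 be the minimal squared gap (mu_k - mu_j)\<^sup>2
   between distinct centres.  The heart of the proof is the bound

       objective P \<le> V - D/2 * error_rate P         for every admissible matrix P.

   It is obtained column by column: for a column with masses x_k (total m, largest
   entry M), the weighted variance identity
       \<Sum>k \<Sum>j x_k x_j (mu_k - mu_j)\<^sup>2 = 2 (m \<Sum>k x_k mu_k\<^sup>2 - (\<Sum>k x_k mu_k)\<^sup>2)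
   and the lower bound D * m * (m - M) for the left-hand side give
       m * (column mean)\<^sup>2 \<le> \<Sum>k x_k mu_k\<^sup>2 - D/2 * (m - M);
   summing over columns yields the bound.  The diagonal matrix attains V with error
   rate 0, so f(0) = V; the one-column matrix has error rate 1 - max_k p_k, so every
   constraint set in range is nonempty and f is antitone; finally the bound gives
   f(e) \<le> V - D/2 * e < V for e > 0. *)

lemma weighted_variance_identity:
  fixes x mu :: "'a \<Rightarrow> real"
  shows "(\<Sum>k\<in>I. \<Sum>j\<in>I. x k * x j * (mu k - mu j)^2)
       = 2 * ((\<Sum>k\<in>I. x k) * (\<Sum>k\<in>I. x k * (mu k)^2) - (\<Sum>k\<in>I. x k * mu k)^2)"
    (is "_ = 2 * (?m * ?S2 - ?S1^2)")
proof -
  have "(\<Sum>k\<in>I. \<Sum>j\<in>I. x k * x j * (mu k - mu j)^2)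
      = (\<Sum>k\<in>I. \<Sum>j\<in>I. x k * (mu k)^2 * x j)
      + (\<Sum>k\<in>I. \<Sum>j\<in>I. x k * (x j * (mu j)^2))
      - 2 * (\<Sum>k\<in>I. \<Sum>j\<in>I. x k * mu k * (x j * mu j))"
    by (simp add: sum_subtractf sum.distrib sum_distrib_left power2_diff algebra_simps)
  also have "\<dots> = ?S2 * ?m + ?m * ?S2 - 2 * ?S1 * ?S1"
    by (simp only: sum_product mult.assoc)
  finally show ?thesis by (simp add: power2_eq_square algebra_simps)
qed

text \<open>If distinct values are separated by squared gap at least D, the pairwise sum
  is at least D * m * (m - M), where m is the total mass and M bounds each weight:
  every unit of mass outside the heaviest point is paired with separated mass.\<close>

lemma separated_pair_sum_lower:
  fixes x mu :: "'a \<Rightarrow> real"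
  assumes fin: "finite I"
    and nonneg: "\<And>k. k \<in> I \<Longrightarrow> x k \<ge> 0"
    and le_M: "\<And>k. k \<in> I \<Longrightarrow> x k \<le> M"
    and sep: "\<And>k j. k \<in> I \<Longrightarrow> j \<in> I \<Longrightarrow> k \<noteq> j \<Longrightarrow> D \<le> (mu k - mu j)^2"
    and D_nonneg: "D \<ge> 0"
  shows "D * (\<Sum>k\<in>I. x k) * ((\<Sum>k\<in>I. x k) - M)
       \<le> (\<Sum>k\<in>I. \<Sum>j\<in>I. x k * x j * (mu k - mu j)^2)"
proof -
  let ?m = "\<Sum>k\<in>I. x k"
  have "D * ?m * (?m - M) = (\<Sum>k\<in>I. D * x k * (?m - M))"
    by (simp add: sum_distrib_left sum_distrib_right)
  also have "\<dots> \<le> (\<Sum>k\<in>I. D * x k * (?m - x k))"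
    using nonneg le_M D_nonneg by (intro sum_mono mult_left_mono) auto
  also have "\<dots> = (\<Sum>k\<in>I. \<Sum>j\<in>I - {k}. x k * x j * D)"
    using fin by (intro sum.cong refl)
      (simp add: sum_diff1 sum_distrib_left[symmetric] sum_distrib_right[symmetric] algebra_simps)
  also have "\<dots> \<le> (\<Sum>k\<in>I. \<Sum>j\<in>I - {k}. x k * x j * (mu k - mu j)^2)"
    using nonneg sep by (intro sum_mono mult_left_mono) auto
  also have "\<dots> = (\<Sum>k\<in>I. \<Sum>j\<in>I. x k * x j * (mu k - mu j)^2)"
  proof (rule sum.cong[OF refl])
    fix k assume "k \<in> I"
    then show "(\<Sum>j\<in>I - {k}. x k * x j * (mu k - mu j)^2) = (\<Sum>j\<in>I. x k * x j * (mu k - mu j)^2)"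
      using sum.remove[OF fin \<open>k \<in> I\<close>, of "\<lambda>j. x k * x j * (mu k - mu j)^2"] by simp
  qed
  finally show ?thesis .
qed

lemma column_bound:
  fixes x mu :: "'a \<Rightarrow> real"
  assumes fin: "finite I" and ne: "I \<noteq> {}"
    and nonneg: "\<And>k. k \<in> I \<Longrightarrow> x k \<ge> 0"
    and sep: "\<And>k j. k \<in> I \<Longrightarrow> j \<in> I \<Longrightarrow> k \<noteq> j \<Longrightarrow> D \<le> (mu k - mu j)^2"
    and D_nonneg: "D \<ge> 0"
  shows "(if (\<Sum>k\<in>I. x k) = 0 then 0
          else (\<Sum>k\<in>I. x k) * ((\<Sum>k\<in>I. x k * mu k) / (\<Sum>k\<in>I. x k))^2)
       \<le> (\<Sum>k\<in>I. x k * (mu k)^2) - D/2 * ((\<Sum>k\<in>I. x k) - Max (x ` I))"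
proof -
  define m where "m = (\<Sum>k\<in>I. x k)"
  define S1 where "S1 = (\<Sum>k\<in>I. x k * mu k)"
  define S2 where "S2 = (\<Sum>k\<in>I. x k * (mu k)^2)"
  define M where "M = Max (x ` I)"
  have le_M: "x k \<le> M" if "k \<in> I" for k
    unfolding M_def using fin that by (intro Max_ge) auto
  have M_nonneg: "M \<ge> 0"
    using ne nonneg le_M by (meson ex_in_conv order_trans)
  have m_nonneg: "m \<ge> 0" and S2_nonneg: "S2 \<ge> 0"
    unfolding m_def S2_def using nonneg by (auto intro: sum_nonneg)
  have variance: "D * m * (m - M) \<le> 2 * (m * S2 - S1^2)"
    using separated_pair_sum_lower[OF fin nonneg le_M sep D_nonneg]
    unfolding weighted_variance_identity m_def S1_def S2_def .
  have "(if m = 0 then 0 else m * (S1 / m)^2) \<le> S2 - D/2 * (m - M)"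
  proof (cases "m = 0")
    case True
    then show ?thesis using S2_nonneg M_nonneg D_nonneg by simp
  next
    case False
    then have "m > 0" using m_nonneg by simp
    then have "m * (S1 / m)^2 = S1^2 / m" by (simp add: power2_eq_square)
    also have "\<dots> \<le> S2 - D/2 * (m - M)"
      using variance \<open>m > 0\<close> by (simp add: field_simps)
    finally show ?thesis using False by simp
  qed
  then show ?thesis unfolding m_def S1_def S2_def M_def .
qed

lemma objective_bound:
  fixes P :: "nat \<Rightarrow> nat \<Rightarrow> real" and p mu :: "nat \<Rightarrow> real"
  assumes K_pos: "K > 0"
    and nonneg: "\<forall>k<K. \<forall>k'<K. P k k' \<ge> 0"
    and rows: "\<forall>k<K. (\<Sum>k'<K. P k k') = p k"
    and p_sum: "(\<Sum>k<K. p k) = 1"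
    and sep: "\<And>k j. k < K \<Longrightarrow> j < K \<Longrightarrow> k \<noteq> j \<Longrightarrow> D \<le> (mu k - mu j)^2"
    and D_nonneg: "D \<ge> 0"
  shows "objective K P mu \<le> (\<Sum>k<K. p k * (mu k)^2) - D/2 * error_rate K P"
proof -
  have "objective K P mu \<le> (\<Sum>k'<K. (\<Sum>k<K. P k k' * (mu k)^2)
          - D/2 * ((\<Sum>k<K. P k k') - Max ((\<lambda>k. P k k') ` {..<K})))"
    unfolding objective_def col_mean_def col_mass_def
    using K_pos nonneg sep D_nonneg by (intro sum_mono column_bound) auto
  also have "\<dots> = (\<Sum>k'<K. \<Sum>k<K. P k k' * (mu k)^2)
      - D/2 * ((\<Sum>k'<K. \<Sum>k<K. P k k') - (\<Sum>k'<K. Max ((\<lambda>k. P k k') ` {..<K})))"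
    by (simp only: sum_subtractf sum_distrib_left[symmetric])
  also have "(\<Sum>k'<K. \<Sum>k<K. P k k' * (mu k)^2) = (\<Sum>k<K. p k * (mu k)^2)"
    by (subst sum.swap) (simp add: rows sum_distrib_right[symmetric])
  also have "(\<Sum>k'<K. \<Sum>k<K. P k k') = 1"
    by (subst sum.swap) (simp add: rows p_sum)
  finally show ?thesis unfolding error_rate_def .
qed

lemma min_separation:
  fixes mu :: "'a \<Rightarrow> real"
  assumes fin: "finite I"
    and distinct: "\<And>k j. k \<in> I \<Longrightarrow> j \<in> I \<Longrightarrow> k \<noteq> j \<Longrightarrow> mu k \<noteq> mu j"
  obtains D where "D > 0" and "\<And>k j. k \<in> I \<Longrightarrow> j \<in> I \<Longrightarrow> k \<noteq> j \<Longrightarrow> D \<le> (mu k - mu j)^2"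
proof -
  define A where "A = (\<lambda>(k, j). (mu k - mu j)^2) ` {(k, j) \<in> I \<times> I. k \<noteq> j}"
  have "finite {(k, j) \<in> I \<times> I. k \<noteq> j}"
    using fin by (intro finite_subset[OF _ finite_cartesian_product[OF fin fin]]) auto
  then have fin_A: "finite A" unfolding A_def by simp
  have A_pos: "a > 0" if "a \<in> A" for a
    using that distinct unfolding A_def by auto
  have "Min (insert 1 A) \<in> insert 1 A" using fin_A by (intro Min_in) auto
  then have "Min (insert 1 A) > 0" using A_pos by auto
  moreover have "Min (insert 1 A) \<le> (mu k - mu j)^2" if "k \<in> I" "j \<in> I" "k \<noteq> j" for k j
    using fin_A that unfolding A_def by (intro Min_le) auto
  ultimately show ?thesis using that by blast
qed

lemma feasible_objective_bound:
  fixes p mu :: "nat \<Rightarrow> real"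
  assumes K_pos: "K > 0" and p_sum: "(\<Sum>k<K. p k) = 1"
    and distinct: "\<And>k j. k < K \<Longrightarrow> j < K \<Longrightarrow> k \<noteq> j \<Longrightarrow> mu k \<noteq> mu j"
  obtains D where "D > 0"
    and "\<And>eps P. feasible K p eps P \<Longrightarrow> objective K P mu \<le> (\<Sum>k<K. p k * (mu k)^2) - D/2 * eps"
proof -
  obtain D where D_pos: "D > 0"
    and sep: "\<And>k j. k < K \<Longrightarrow> j < K \<Longrightarrow> k \<noteq> j \<Longrightarrow> D \<le> (mu k - mu j)^2"
    using min_separation[of "{..<K}" mu] distinct by auto
  have "objective K P mu \<le> (\<Sum>k<K. p k * (mu k)^2) - D/2 * eps" if "feasible K p eps P" for eps P
  proof -
    have "objective K P mu \<le> (\<Sum>k<K. p k * (mu k)^2) - D/2 * error_rate K P"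
      using that K_pos p_sum sep D_pos by (intro objective_bound) (auto simp: feasible_def)
    also have "\<dots> \<le> (\<Sum>k<K. p k * (mu k)^2) - D/2 * eps"
      using that D_pos by (simp add: feasible_def)
    finally show ?thesis .
  qed
  with D_pos show ?thesis using that by blast
qed

definition diagonal_matrix :: "(nat \<Rightarrow> real) \<Rightarrow> nat \<Rightarrow> nat \<Rightarrow> real" where
  "diagonal_matrix p = (\<lambda>k k'. if k = k' then p k else 0)"

definition single_column_matrix :: "(nat \<Rightarrow> real) \<Rightarrow> nat \<Rightarrow> nat \<Rightarrow> real" where
  "single_column_matrix p = (\<lambda>k k'. if k' = 0 then p k else 0)"

lemma diagonal_matrix_feasible:
  assumes p_pos: "\<And>k. k < K \<Longrightarrow> p k > 0" and p_sum: "(\<Sum>k<K. p k) = 1"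
  shows "feasible K p 0 (diagonal_matrix p)"
proof -
  have "Max ((\<lambda>k. diagonal_matrix p k k') ` {..<K}) = p k'" if "k' < K" for k'
    unfolding diagonal_matrix_def using that p_pos by (intro Max_eqI) (auto simp: less_imp_le)
  then have "error_rate K (diagonal_matrix p) = 0"
    unfolding error_rate_def using p_sum by simp
  then show ?thesis
    unfolding feasible_def using p_pos by (auto simp: diagonal_matrix_def less_imp_le)
qed

lemma diagonal_matrix_objective:
  assumes p_pos: "\<And>k. k < K \<Longrightarrow> p k > 0"
  shows "objective K (diagonal_matrix p) mu = (\<Sum>k<K. p k * (mu k)^2)"
  unfolding objective_def
proof (intro sum.cong refl)
  fix k' assume "k' \<in> {..<K}"
  then have k': "k' < K" by simp
  have mass: "col_mass K (diagonal_matrix p) k' = p k'"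
    unfolding col_mass_def diagonal_matrix_def using k' by simp
  have "(\<Sum>k<K. diagonal_matrix p k k' * mu k) = (\<Sum>k<K. if k = k' then p k' * mu k' else 0)"
    unfolding diagonal_matrix_def by (intro sum.cong refl) auto
  then have "col_mean K (diagonal_matrix p) mu k' = mu k'"
    unfolding col_mean_def mass using k' p_pos[OF k'] by simp
  then show "(if col_mass K (diagonal_matrix p) k' = 0 then 0
        else col_mass K (diagonal_matrix p) k' * (col_mean K (diagonal_matrix p) mu k')\<^sup>2)
      = p k' * (mu k')\<^sup>2"
    using mass p_pos[OF k'] by simp
qed

lemma single_column_matrix_feasible:
  assumes K_pos: "K > 0" and p_pos: "\<And>k. k < K \<Longrightarrow> p k > 0"
    and eps: "eps \<le> 1 - Max (p ` {..<K})"
  shows "feasible K p eps (single_column_matrix p)"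
proof -
  have "Max ((\<lambda>k. single_column_matrix p k k') ` {..<K})
      = (if k' = 0 then Max (p ` {..<K}) else 0)" for k'
  proof (cases "k' = 0")
    case False
    then have "(\<lambda>k. single_column_matrix p k k') ` {..<K} = {0}"
      unfolding single_column_matrix_def using K_pos by auto
    then show ?thesis using False by simp
  qed (simp add: single_column_matrix_def)
  then have "error_rate K (single_column_matrix p) = 1 - Max (p ` {..<K})"
    unfolding error_rate_def using K_pos by simp
  then show ?thesis
    unfolding feasible_def using eps K_pos p_pos
    by (auto simp: single_column_matrix_def less_imp_le)
qed

lemma fval_le:
  assumes "feasible K p eps P0"
    and "\<And>P. feasible K p eps P \<Longrightarrow> objective K P mu \<le> B"
  shows "fval K p mu eps \<le> B"
  unfolding fval_def using assms by (intro cSup_least) auto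

lemma fval_eq_attained:
  assumes "feasible K p eps P0" and "objective K P0 mu = B"
    and "\<And>P. feasible K p eps P \<Longrightarrow> objective K P mu \<le> B"
  shows "fval K p mu eps = B"
  unfolding fval_def using assms by (intro cSup_eq_maximum) auto

lemma fval_antimono:
  assumes "e1 \<le> e2" and "feasible K p e2 P0"
    and "\<And>P. feasible K p e1 P \<Longrightarrow> objective K P mu \<le> B"
  shows "fval K p mu e2 \<le> fval K p mu e1"
  unfolding fval_def
proof (rule cSup_subset_mono)
  show "{objective K P mu |P. feasible K p e2 P} \<noteq> {}" using assms(2) by auto
  show "bdd_above {objective K P mu |P. feasible K p e1 P}"
    using assms(3) by (intro bdd_aboveI[of _ B]) auto
  show "{objective K P mu |P. feasible K p e2 P} \<subseteq> {objective K P mu |P. feasible K p e1 P}"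
    using assms(1) unfolding feasible_def by auto
qed

theorem lemma4:
  fixes K :: nat and p mu :: "nat \<Rightarrow> real"
  assumes "K \<ge> 2"
    and "\<And>k. k < K \<Longrightarrow> p k > 0"
    and "(\<Sum>k<K. p k) = 1"
    and "\<And>k j. k < K \<Longrightarrow> j < K \<Longrightarrow> k \<noteq> j \<Longrightarrow> mu k \<noteq> mu j"
  defines "emax \<equiv> 1 - Max (p ` {..<K})"
  shows "(\<forall>e1 e2. 0 \<le> e1 \<longrightarrow> e1 \<le> e2 \<longrightarrow> e2 \<le> emax \<longrightarrow> fval K p mu e2 \<le> fval K p mu e1)
    \<and> fval K p mu 0 = (\<Sum>k<K. p k * (mu k)\<^sup>2)
    \<and> (\<forall>e. 0 < e \<longrightarrow> e \<le> emax \<longrightarrow> fval K p mu e < fval K p mu 0)"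
proof -
  note p_pos = assms(2) and p_sum = assms(3)
  have K_pos: "K > 0" using assms(1) by simp
  define V where "V = (\<Sum>k<K. p k * (mu k)\<^sup>2)"
  obtain D where D_pos: "D > 0"
    and bound: "\<And>e P. feasible K p e P \<Longrightarrow> objective K P mu \<le> V - D/2 * e"
    using feasible_objective_bound[of K p mu] K_pos p_sum assms(4) unfolding V_def by blast
  have bound_V: "objective K P mu \<le> V" if "feasible K p e P" "e \<ge> 0" for P e
  proof -
    have "D/2 * e \<ge> 0" using D_pos that(2) by simp
    then show ?thesis using bound[OF that(1)] by linarith
  qed
  have f0: "fval K p mu 0 = V"
    using diagonal_matrix_feasible[OF p_pos p_sum] diagonal_matrix_objective[OF p_pos] bound_V
    unfolding V_def by (intro fval_eq_attained) auto
  have "fval K p mu e2 \<le> fval K p mu e1" if "0 \<le> e1" "e1 \<le> e2" "e2 \<le> emax" for e1 e2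
    using that single_column_matrix_feasible[OF K_pos p_pos] bound_V unfolding emax_def
    by (intro fval_antimono) auto
  moreover have "fval K p mu e < fval K p mu 0" if "0 < e" "e \<le> emax" for e
  proof -
    have "fval K p mu e \<le> V - D/2 * e"
      using that single_column_matrix_feasible[OF K_pos p_pos] bound unfolding emax_def
      by (intro fval_le) auto
    also have "\<dots> < V" using D_pos that(1) by simp
    finally show ?thesis using f0 by simp
  qed
  ultimately show ?thesis using f0 unfolding V_def by blast
qed

end
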